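(* Under the same setting, let $\hat N_A$ be the global dual basis functions defined there. Then for every function $u=\sum_{B=1}^n P_B N_B$ in the spline space spanned by $\{N_A\}$, the coefficients are recovered as $P_A=\int_\Omega \hat N_A\,u\,d\Omega$ for all $A$. Equivalently, the operator $\Pi u=\sum_A\big(\int_\Omega\hat N_A u\,d\Omega\big)N_A$, defined for $u\in L^2(\Omega)$, is a linear projection onto the spline space (it reproduces every spline).
   Context: Setting: $\Omega\subset\mathbb{R}^d$ is partitioned into elements $\Omega^e$ of positive measure; $\{N_A\}_{A=1}^n$ is a nonnegative spline basis with $\int_\Omega N_A>0$; on each element, with local-to-global index map $a\mapsto A(e,a)$ listing the basis functions not identically zero there, $\mathbf{N}^e=\mathbf{C}^e\mathbf{B}^e$ for linearly independent Bernstein functions $\mathbf{B}^e$ and invertible extraction matrix $\mathbf{C}^e$; $\mathbf{R}^e=(\mathbf{C}^e)^{-1}$; $G^e_{ij}=\int_{\Omega^e}B^e_iB^e_j$; $\omega^e_a=\int_{\Omega^e}N_{A(e,a)}/\int_\Omega N_{A(e,a)}$; $\hat{\mathbf{N}}^e=\operatorname{diag}(\boldsymbol{\omega}^e)(\mathbf{R}^e)^T(\mathbf{G}^e)^{-1}\mathbf{B}^e$; and $\hat N_A|_{\Omega^e}=\hat N^e_a$ if $A=A(e,a)$, $0$ otherwise. *)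

theory Defs
  imports "HOL-Analysis.Analysis"
begin

text \<open>Square matrices of size m are represented as functions nat \<Rightarrow> nat \<Rightarrow> real,
  only the entries with indices below m being relevant.\<close>

definition is_inverse_mat :: "nat \<Rightarrow> (nat \<Rightarrow> nat \<Rightarrow> real) \<Rightarrow> (nat \<Rightarrow> nat \<Rightarrow> real) \<Rightarrow> bool" where
  "is_inverse_mat m M R \<longleftrightarrow>
     (\<forall>i<m. \<forall>j<m. (\<Sum>k<m. M i k * R k j) = (if i = j then 1 else 0)
                 \<and> (\<Sum>k<m. R i k * M k j) = (if i = j then 1 else 0))"

definition invertible_mat_n :: "nat \<Rightarrow> (nat \<Rightarrow> nat \<Rightarrow> real) \<Rightarrow> bool" where
  "invertible_mat_n m M \<longleftrightarrow> (\<exists>R. is_inverse_mat m M R)"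

definition inv_mat_n :: "nat \<Rightarrow> (nat \<Rightarrow> nat \<Rightarrow> real) \<Rightarrow> (nat \<Rightarrow> nat \<Rightarrow> real)" where
  "inv_mat_n m M = (SOME R. is_inverse_mat m M R)"

definition gram :: "'a::euclidean_space set \<Rightarrow> (nat \<Rightarrow> 'a \<Rightarrow> real) \<Rightarrow> nat \<Rightarrow> nat \<Rightarrow> real" where
  "gram S B i j = (LINT x:S|lebesgue. B i x * B j x)"

definition dual_weight :: "(nat \<Rightarrow> 'a::euclidean_space \<Rightarrow> real) \<Rightarrow> 'a set \<Rightarrow> 'a set \<Rightarrow> nat \<Rightarrow> real" where
  "dual_weight N \<Omega> S A = (LINT x:S|lebesgue. N A x) / (LINT x:\<Omega>|lebesgue. N A x)"

text \<open>Local dual basis: hat N^e = diag(omega^e) (R^e)^T (G^e)^{-1} B^e, R^e = (C^e)^{-1}.\<close>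
definition dual_local :: "nat \<Rightarrow> (nat \<Rightarrow> nat \<Rightarrow> real) \<Rightarrow> (nat \<Rightarrow> 'a::euclidean_space \<Rightarrow> real)
    \<Rightarrow> 'a set \<Rightarrow> (nat \<Rightarrow> real) \<Rightarrow> nat \<Rightarrow> 'a \<Rightarrow> real" where
  "dual_local m Ce Be S w a x =
     w a * (\<Sum>i<m. \<Sum>j<m. inv_mat_n m Ce i a * inv_mat_n m (gram S Be) i j * Be j x)"

text \<open>On the (null) overlaps of elements the element with least index is used;
  outside Omega the function is 0.\<close>
definition dual_basis :: "nat \<Rightarrow> (nat \<Rightarrow> 'a::euclidean_space set) \<Rightarrow> (nat \<Rightarrow> nat) \<Rightarrow> (nat \<Rightarrow> nat \<Rightarrow> nat)
    \<Rightarrow> (nat \<Rightarrow> nat \<Rightarrow> 'a \<Rightarrow> real) \<Rightarrow> (nat \<Rightarrow> nat \<Rightarrow> nat \<Rightarrow> real) \<Rightarrow> (nat \<Rightarrow> 'a \<Rightarrow> real) \<Rightarrow> 'a set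
    \<Rightarrow> nat \<Rightarrow> 'a \<Rightarrow> real" where
  "dual_basis ne Om nloc loc Bern C N \<Omega> A x =
     (if \<exists>e<ne. x \<in> Om e then
        (let e = (LEAST e. e < ne \<and> x \<in> Om e) in
          if \<exists>a<nloc e. loc e a = A then
            dual_local (nloc e) (C e) (Bern e) (Om e)
              (\<lambda>a. dual_weight N \<Omega> (Om e) (loc e a))
              (THE a. a < nloc e \<and> loc e a = A) x
          else 0)
      else 0)"

definition dual_proj :: "nat \<Rightarrow> (nat \<Rightarrow> 'a::euclidean_space \<Rightarrow> real) \<Rightarrow> (nat \<Rightarrow> 'a \<Rightarrow> real) \<Rightarrow> 'a set
    \<Rightarrow> ('a \<Rightarrow> real) \<Rightarrow> 'a \<Rightarrow> real" where
  "dual_proj n Nhat N \<Omega> u x = (\<Sum>A<n. (LINT y:\<Omega>|lebesgue. Nhat A y * u y) * N A x)"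

end

theory Submission
  imports Defs "Jordan_Normal_Form.Determinant"
begin

text \<open>On an element the spline with coefficients P is the Bernstein combination with
  coefficient vector P C (P restricted to the active indices).  The Gram matrix of the linearly
  independent Bernstein functions is invertible and G^{-1} B is L2-biorthogonal to B, so
  integrating the local dual function of index a against the spline gives the a-th entry of
  P C R = P, scaled by the weight \<omega>_a.  The weights of a basis function sum to one over the
  elements, which gives P_A.  Linearity of the projection is linearity of the integral, since
  every dual function is a finite combination of L2 functions on each element.\<close>

lemma set_integrable_sum:
  fixes f :: "'i \<Rightarrow> 'b \<Rightarrow> real"
  assumes "\<And>i. i \<in> I \<Longrightarrow> set_integrable M S (f i)"
  shows "set_integrable M S (\<lambda>x. \<Sum>i\<in>I. f i x)"
proof -
  have "integrable M (\<lambda>x. \<Sum>i\<in>I. indicator S x *\<^sub>R f i x)"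
    using assms unfolding set_integrable_def by (intro Bochner_Integration.integrable_sum) auto
  thus ?thesis unfolding set_integrable_def by (simp add: sum_distrib_left)
qed

lemma set_integral_sum:
  fixes f :: "'i \<Rightarrow> 'b \<Rightarrow> real"
  assumes "\<And>i. i \<in> I \<Longrightarrow> set_integrable M S (f i)"
  shows "(LINT x:S|M. (\<Sum>i\<in>I. f i x)) = (\<Sum>i\<in>I. LINT x:S|M. f i x)"
proof -
  have "(LINT x:S|M. (\<Sum>i\<in>I. f i x)) = integral\<^sup>L M (\<lambda>x. \<Sum>i\<in>I. indicator S x *\<^sub>R f i x)"
    unfolding set_lebesgue_integral_def by (simp add: sum_distrib_left)
  also have "\<dots> = (\<Sum>i\<in>I. integral\<^sup>L M (\<lambda>x. indicator S x *\<^sub>R f i x))"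
    using assms unfolding set_integrable_def by (intro Bochner_Integration.integral_sum) auto
  finally show ?thesis unfolding set_lebesgue_integral_def .
qed

lemma set_integrable_mult_square_integrable:
  fixes f g :: "'b \<Rightarrow> real"
  assumes fm: "set_borel_measurable M S f" and gm: "set_borel_measurable M S g"
    and f2: "set_integrable M S (\<lambda>x. (f x)\<^sup>2)" and g2: "set_integrable M S (\<lambda>x. (g x)\<^sup>2)"
  shows "set_integrable M S (\<lambda>x. f x * g x)"
proof (rule set_integrable_bound[OF set_integral_add(1)[OF f2 g2]])
  have "(\<lambda>x. indicator S x *\<^sub>R (f x * g x)) = (\<lambda>x. (indicator S x *\<^sub>R f x) * (indicator S x *\<^sub>R g x))"
    by (auto simp: fun_eq_iff indicator_def)
  thus "set_borel_measurable M S (\<lambda>x. f x * g x)"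
    using fm gm unfolding set_borel_measurable_def by simp
  have "\<bar>f x * g x\<bar> \<le> (f x)\<^sup>2 + (g x)\<^sup>2" for x
  proof -
    have "\<bar>f x * g x\<bar> \<le> 2 * \<bar>f x\<bar> * \<bar>g x\<bar>" by (simp add: abs_mult)
    also have "\<dots> \<le> (f x)\<^sup>2 + (g x)\<^sup>2" using sum_squares_bound[of "\<bar>f x\<bar>" "\<bar>g x\<bar>"] by simp
    finally show ?thesis .
  qed
  thus "AE x in M. x \<in> S \<longrightarrow> norm (f x * g x) \<le> norm ((f x)\<^sup>2 + (g x)\<^sup>2)"
    by simp
qed

lemma set_integral_glue_least:
  fixes f :: "nat \<Rightarrow> 'b \<Rightarrow> real"
  assumes sets: "\<And>e. e < k \<Longrightarrow> S e \<in> sets M"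
    and null: "\<And>e e'. e < k \<Longrightarrow> e' < k \<Longrightarrow> e \<noteq> e' \<Longrightarrow> S e \<inter> S e' \<in> null_sets M"
    and int: "\<And>e. e < k \<Longrightarrow> set_integrable M (S e) (f e)"
    and glue: "\<And>x. x \<in> (\<Union>e<k. S e) \<Longrightarrow> h x = f (LEAST e. e < k \<and> x \<in> S e) x"
  shows "set_integrable M (\<Union>e<k. S e) h"
    and "(LINT x:(\<Union>e<k. S e)|M. h x) = (\<Sum>e<k. LINT x:S e|M. f e x)"
proof -
  let ?D = "disjointed S"
  have D_sets: "?D e \<in> sets M" if "e < k" for e
    using sets that unfolding disjointed_def by (intro sets.Diff sets.finite_UN) auto
  have h_D: "h x = f e x" if "e < k" "x \<in> ?D e" for e x
  proof -
    have "(LEAST e. e < k \<and> x \<in> S e) = e"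
    proof (rule Least_equality)
      show "e < k \<and> x \<in> S e" using that disjointed_subset[of S e] by blast
      have "x \<notin> S e'" if "e' < e" for e' using \<open>x \<in> ?D e\<close> that by (auto simp: disjointed_def)
      thus "\<And>e'. e' < k \<and> x \<in> S e' \<Longrightarrow> e \<le> e'" by (meson not_le)
    qed
    moreover have "x \<in> (\<Union>e<k. S e)" using that disjointed_subset[of S e] by blast
    ultimately show ?thesis using glue by simp
  qed
  have int_D: "set_integrable M (?D e) h" if "e < k" for e
  proof -
    have "set_integrable M (?D e) (f e)"
      by (rule set_integrable_subset[OF int[OF that] D_sets[OF that] disjointed_subset])
    moreover have "set_integrable M (?D e) h = set_integrable M (?D e) (f e)"
      by (rule set_integrable_cong) (auto simp: h_D[OF that])
    ultimately show ?thesis by simp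
  qed
  have UN_D: "(\<Union>e<k. ?D e) = (\<Union>e<k. S e)"
    using finite_UN_disjointed_eq[of S k] by (simp add: atLeast0LessThan)
  show "set_integrable M (\<Union>e<k. S e) h"
    unfolding UN_D[symmetric] by (intro set_integrable_UN int_D D_sets) auto
  have "(LINT x:(\<Union>e<k. S e)|M. h x) = (\<Sum>e<k. LINT x:?D e|M. h x)"
    unfolding UN_D[symmetric]
    using disjoint_family_on_mono[OF subset_UNIV disjoint_family_disjointed]
    by (intro set_integral_finite_Union int_D D_sets) auto
  also have "\<dots> = (\<Sum>e<k. LINT x:?D e|M. f e x)"
    using h_D D_sets by (intro sum.cong refl set_lebesgue_integral_cong) auto
  also have "\<dots> = (\<Sum>e<k. LINT x:S e|M. f e x)"
  proof (intro sum.cong refl set_integral_cong_set)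
    fix e assume "e \<in> {..<k}"
    hence e: "e < k" by simp
    have "S e - ?D e = (\<Union>e'<e. S e \<inter> S e')" by (auto simp: disjointed_def)
    moreover have "(\<Union>e'<e. S e \<inter> S e') \<in> null_sets M"
      using e null by (intro null_sets.finite_UN) auto
    ultimately have "S e - ?D e \<in> null_sets M" by simp
    hence "AE x in M. x \<notin> S e - ?D e" by (rule AE_not_in)
    thus "AE x in M. x \<in> S e \<longleftrightarrow> x \<in> ?D e"
      using disjointed_subset[of S e] by (auto elim: AE_mp)
    show "set_borel_measurable M (S e) (f e)"
      using int[OF e] unfolding set_integrable_def set_borel_measurable_def by simp
    thus "set_borel_measurable M (?D e) (f e)"
      by (rule set_borel_measurable_subset[OF _ D_sets[OF e] disjointed_subset])
  qed
  finally show "(LINT x:(\<Union>e<k. S e)|M. h x) = (\<Sum>e<k. LINT x:S e|M. f e x)" .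
qed

lemma invertible_mat_n_if_trivial_kernel:
  fixes M :: "nat \<Rightarrow> nat \<Rightarrow> real"
  assumes ker: "\<And>c. \<forall>i<m. (\<Sum>j<m. M i j * c j) = 0 \<Longrightarrow> \<forall>i<m. c i = 0"
  shows "invertible_mat_n m M"
proof -
  define A where "A = mat m m (\<lambda>(i,j). M i j)"
  have A: "A \<in> carrier_mat m m" unfolding A_def by simp
  have "Determinant.det A \<noteq> 0"
  proof
    assume "Determinant.det A = 0"
    then obtain v where v: "v \<in> carrier_vec m" "v \<noteq> 0\<^sub>v m" "A *\<^sub>v v = 0\<^sub>v m"
      using det_0_iff_vec_prod_zero_field[OF A] by blast
    have "(\<Sum>j<m. M i j * v $ j) = 0" if "i < m" for i
      using that v(1) arg_cong[OF v(3), of "\<lambda>w. w $ i"]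
      by (simp add: A_def scalar_prod_def lessThan_atLeast0)
    hence "v = 0\<^sub>v m" using ker[of "\<lambda>j. v $ j"] v(1) by (intro eq_vecI) auto
    with v(2) show False by simp
  qed
  then obtain B where B: "B \<in> carrier_mat m m" "B * A = 1\<^sub>m m" "A * B = 1\<^sub>m m"
    using det_non_zero_imp_unit[OF A, of "()"] unfolding Units_def ring_mat_def by auto
  have "is_inverse_mat m M (\<lambda>i j. B $$ (i,j))"
    unfolding is_inverse_mat_def
  proof (intro allI impI conjI)
    fix i j assume i: "i < m" and j: "j < m"
    show "(\<Sum>k<m. M i k * B $$ (k,j)) = (if i = j then 1 else 0)"
      using arg_cong[OF B(3), of "\<lambda>X. X $$ (i,j)"] i j B(1)
      by (simp add: A_def scalar_prod_def lessThan_atLeast0)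
    show "(\<Sum>k<m. B $$ (i,k) * M k j) = (if i = j then 1 else 0)"
      using arg_cong[OF B(2), of "\<lambda>X. X $$ (i,j)"] i j B(1)
      by (simp add: A_def scalar_prod_def lessThan_atLeast0)
  qed
  thus ?thesis unfolding invertible_mat_n_def by blast
qed

lemma is_inverse_mat_inv_mat_n:
  assumes "invertible_mat_n m M"
  shows "is_inverse_mat m M (inv_mat_n m M)"
  using assms unfolding invertible_mat_n_def inv_mat_n_def by (rule someI_ex)

lemma is_inverse_mat_sym: "is_inverse_mat m M R \<Longrightarrow> is_inverse_mat m R M"
  unfolding is_inverse_mat_def by simp

lemma is_inverse_mat_row_cancel:
  assumes "is_inverse_mat m M R" "k < m"
  shows "(\<Sum>i<m. x i * (\<Sum>j<m. R i j * M j k)) = x k"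
proof -
  have "(\<Sum>i<m. x i * (\<Sum>j<m. R i j * M j k)) = (\<Sum>i<m. x i * (if i = k then 1 else 0))"
    using assms unfolding is_inverse_mat_def by (intro sum.cong) auto
  thus ?thesis using assms(2) by (simp add: if_distrib cong: if_cong)
qed

lemma gram_bilinear:
  fixes B :: "nat \<Rightarrow> 'a::euclidean_space \<Rightarrow> real"
  assumes meas: "\<And>i. i < m \<Longrightarrow> set_borel_measurable lebesgue S (B i)"
    and sq: "\<And>i. i < m \<Longrightarrow> set_integrable lebesgue S (\<lambda>x. (B i x)\<^sup>2)"
  shows "(LINT x:S|lebesgue. (\<Sum>j<m. c j * B j x) * (\<Sum>k<m. d k * B k x))
       = (\<Sum>j<m. \<Sum>k<m. c j * d k * gram S B j k)"
proof -
  have BB: "set_integrable lebesgue S (\<lambda>x. c j * d k * (B j x * B k x))"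
    if "j < m" "k < m" for j k
    using that by (intro set_integrable_mult_right set_integrable_mult_square_integrable meas sq)
  have "(LINT x:S|lebesgue. (\<Sum>j<m. c j * B j x) * (\<Sum>k<m. d k * B k x))
      = (LINT x:S|lebesgue. (\<Sum>j<m. \<Sum>k<m. c j * d k * (B j x * B k x)))"
    by (simp add: sum_product mult_ac)
  also have "\<dots> = (\<Sum>j<m. LINT x:S|lebesgue. (\<Sum>k<m. c j * d k * (B j x * B k x)))"
    using BB by (intro set_integral_sum set_integrable_sum) auto
  also have "\<dots> = (\<Sum>j<m. \<Sum>k<m. LINT x:S|lebesgue. c j * d k * (B j x * B k x))"
    using BB by (intro sum.cong refl set_integral_sum) auto
  finally show ?thesis unfolding gram_def by simp
qed

lemma invertible_gram:
  fixes B :: "nat \<Rightarrow> 'a::euclidean_space \<Rightarrow> real"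
  assumes meas: "\<And>i. i < m \<Longrightarrow> set_borel_measurable lebesgue S (B i)"
    and sq: "\<And>i. i < m \<Longrightarrow> set_integrable lebesgue S (\<lambda>x. (B i x)\<^sup>2)"
    and indep: "\<And>c. AE x in lebesgue. x \<in> S \<longrightarrow> (\<Sum>i<m. c i * B i x) = 0 \<Longrightarrow> \<forall>i<m. c i = 0"
  shows "invertible_mat_n m (gram S B)"
proof (rule invertible_mat_n_if_trivial_kernel)
  fix c assume ker: "\<forall>i<m. (\<Sum>j<m. gram S B i j * c j) = 0"
  define s where "s x = (\<Sum>j<m. c j * B j x)" for x
  have "(LINT x:S|lebesgue. s x * s x) = (\<Sum>j<m. \<Sum>k<m. c j * c k * gram S B j k)"
    unfolding s_def by (rule gram_bilinear[OF meas sq])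
  also have "\<dots> = (\<Sum>j<m. c j * (\<Sum>k<m. gram S B j k * c k))"
    by (simp add: sum_distrib_left mult_ac)
  also have "\<dots> = 0" using ker by simp
  finally have "integral\<^sup>L lebesgue (\<lambda>x. indicator S x * (s x * s x)) = 0"
    unfolding set_lebesgue_integral_def by simp
  moreover have "set_integrable lebesgue S (\<lambda>x. s x * s x)"
  proof -
    have "s x * s x = (\<Sum>j<m. \<Sum>k<m. c j * c k * (B j x * B k x))" for x
      unfolding s_def by (simp add: sum_product mult_ac)
    moreover have "set_integrable lebesgue S (\<lambda>x. \<Sum>j<m. \<Sum>k<m. c j * c k * (B j x * B k x))"
      by (intro set_integrable_sum set_integrable_mult_right set_integrable_mult_square_integrable
          meas sq) auto
    ultimately show ?thesis by simp
  qed
  ultimately have "AE x in lebesgue. indicator S x * (s x * s x) = 0"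
    by (subst integral_nonneg_eq_0_iff_AE[symmetric]) (auto simp: set_integrable_def)
  hence "AE x in lebesgue. x \<in> S \<longrightarrow> s x = 0"
    by (rule AE_mp) (auto simp: indicator_def)
  thus "\<forall>i<m. c i = 0" unfolding s_def by (rule indep)
qed

lemma dual_local_eq_sum:
  "dual_local m Ce Be S w a x
     = (\<Sum>j<m. (w a * (\<Sum>i<m. inv_mat_n m Ce i a * inv_mat_n m (gram S Be) i j)) * Be j x)"
proof -
  have "dual_local m Ce Be S w a x
      = (\<Sum>i<m. \<Sum>j<m. w a * (inv_mat_n m Ce i a * inv_mat_n m (gram S Be) i j) * Be j x)"
    unfolding dual_local_def by (simp add: sum_distrib_left mult.assoc)
  also have "\<dots> = (\<Sum>j<m. \<Sum>i<m. w a * (inv_mat_n m Ce i a * inv_mat_n m (gram S Be) i j) * Be j x)"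
    by (rule sum.swap)
  finally show ?thesis by (simp add: sum_distrib_left sum_distrib_right)
qed

lemma set_integrable_dual_local_mult:
  assumes "\<And>j. j < m \<Longrightarrow> set_integrable M S (\<lambda>x. Be j x * u x)"
  shows "set_integrable M S (\<lambda>x. dual_local m Ce Be S' w a x * u x)"
proof -
  let ?coef = "\<lambda>j. w a * (\<Sum>i<m. inv_mat_n m Ce i a * inv_mat_n m (gram S' Be) i j)"
  have "dual_local m Ce Be S' w a x * u x = (\<Sum>j<m. ?coef j * (Be j x * u x))" for x
    by (simp add: dual_local_eq_sum sum_distrib_right mult.assoc)
  moreover have "set_integrable M S (\<lambda>x. \<Sum>j<m. ?coef j * (Be j x * u x))"
    using assms by (intro set_integrable_sum set_integrable_mult_right) auto
  ultimately show ?thesis by simp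
qed

lemma dual_local_biorthogonal:
  fixes Be :: "nat \<Rightarrow> 'a::euclidean_space \<Rightarrow> real"
  assumes meas: "\<And>i. i < m \<Longrightarrow> set_borel_measurable lebesgue S (Be i)"
    and sq: "\<And>i. i < m \<Longrightarrow> set_integrable lebesgue S (\<lambda>x. (Be i x)\<^sup>2)"
    and Ce: "invertible_mat_n m Ce" and G: "invertible_mat_n m (gram S Be)"
    and a: "a < m"
  shows "(LINT x:S|lebesgue. dual_local m Ce Be S w a x * (\<Sum>k<m. (\<Sum>b<m. p b * Ce b k) * Be k x))
       = w a * p a"
proof -
  let ?G = "gram S Be"
  let ?R = "inv_mat_n m Ce"
  let ?Gi = "inv_mat_n m ?G"
  define c where "c j = w a * (\<Sum>i<m. ?R i a * ?Gi i j)" for j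
  define d where "d k = (\<Sum>b<m. p b * Ce b k)" for k
  have cG: "(\<Sum>j<m. c j * ?G j k) = w a * ?R k a" if "k < m" for k
  proof -
    have "(\<Sum>j<m. c j * ?G j k) = w a * (\<Sum>j<m. \<Sum>i<m. ?R i a * ?Gi i j * ?G j k)"
      by (simp add: c_def sum_distrib_left sum_distrib_right mult.assoc)
    also have "\<dots> = w a * (\<Sum>i<m. ?R i a * (\<Sum>j<m. ?Gi i j * ?G j k))"
      by (subst sum.swap) (simp add: sum_distrib_left mult.assoc)
    also have "\<dots> = w a * ?R k a"
      using is_inverse_mat_row_cancel[OF is_inverse_mat_inv_mat_n[OF G] that] by simp
    finally show ?thesis .
  qed
  have "(LINT x:S|lebesgue. dual_local m Ce Be S w a x * (\<Sum>k<m. (\<Sum>b<m. p b * Ce b k) * Be k x))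
      = (LINT x:S|lebesgue. (\<Sum>j<m. c j * Be j x) * (\<Sum>k<m. d k * Be k x))"
    unfolding dual_local_eq_sum c_def d_def ..
  also have "\<dots> = (\<Sum>j<m. \<Sum>k<m. c j * d k * ?G j k)"
    by (rule gram_bilinear[OF meas sq])
  also have "\<dots> = (\<Sum>k<m. d k * (\<Sum>j<m. c j * ?G j k))"
    by (subst sum.swap) (simp add: sum_distrib_left mult_ac)
  also have "\<dots> = (\<Sum>k<m. d k * (w a * ?R k a))"
    using cG by simp
  also have "\<dots> = w a * (\<Sum>k<m. \<Sum>b<m. p b * Ce b k * ?R k a)"
    by (simp add: d_def sum_distrib_left sum_distrib_right mult_ac)
  also have "\<dots> = w a * (\<Sum>b<m. p b * (\<Sum>k<m. Ce b k * ?R k a))"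
    by (subst sum.swap) (simp add: sum_distrib_left mult.assoc)
  also have "\<dots> = w a * p a"
    using is_inverse_mat_row_cancel[OF is_inverse_mat_sym[OF is_inverse_mat_inv_mat_n[OF Ce]] a]
    by simp
  finally show ?thesis .
qed

locale bezier_extraction =
  fixes \<Omega> :: "'a::euclidean_space set"
    and n :: nat
    and N :: "nat \<Rightarrow> 'a \<Rightarrow> real"
    and ne :: nat
    and Om :: "nat \<Rightarrow> 'a set"
    and nloc :: "nat \<Rightarrow> nat"
    and loc :: "nat \<Rightarrow> nat \<Rightarrow> nat"
    and Bern :: "nat \<Rightarrow> nat \<Rightarrow> 'a \<Rightarrow> real"
    and C :: "nat \<Rightarrow> nat \<Rightarrow> nat \<Rightarrow> real"
  assumes partition: "\<Omega> = (\<Union>e<ne. Om e)"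
    and elem_meas: "\<And>e. e < ne \<Longrightarrow> Om e \<in> sets lebesgue"
    and elem_disj: "\<And>e e'. e < ne \<Longrightarrow> e' < ne \<Longrightarrow> e \<noteq> e' \<Longrightarrow> Om e \<inter> Om e' \<in> null_sets lebesgue"
    and N_int: "\<And>A. A < n \<Longrightarrow> set_integrable lebesgue \<Omega> (N A)"
    and N_int_pos: "\<And>A. A < n \<Longrightarrow> (LINT x:\<Omega>|lebesgue. N A x) > 0"
    and loc_inj: "\<And>e. e < ne \<Longrightarrow> inj_on (loc e) {..<nloc e}"
    and loc_active: "\<And>e. e < ne \<Longrightarrow> loc e ` {..<nloc e} = {A. A < n \<and> (\<exists>x\<in>Om e. N A x \<noteq> 0)}"
    and Bern_meas: "\<And>e i. e < ne \<Longrightarrow> i < nloc e \<Longrightarrow> set_borel_measurable lebesgue (Om e) (Bern e i)"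
    and Bern_L2: "\<And>e i. e < ne \<Longrightarrow> i < nloc e \<Longrightarrow> set_integrable lebesgue (Om e) (\<lambda>x. (Bern e i x)\<^sup>2)"
    and Bern_indep: "\<And>e c. e < ne \<Longrightarrow>
        (AE x in lebesgue. x \<in> Om e \<longrightarrow> (\<Sum>i<nloc e. c i * Bern e i x) = 0) \<Longrightarrow> (\<forall>i<nloc e. c i = 0)"
    and C_inv: "\<And>e. e < ne \<Longrightarrow> invertible_mat_n (nloc e) (C e)"
    and extraction: "\<And>e a x. e < ne \<Longrightarrow> a < nloc e \<Longrightarrow> x \<in> Om e \<Longrightarrow>
        N (loc e a) x = (\<Sum>i<nloc e. C e a i * Bern e i x)"
begin

abbreviation dual :: "nat \<Rightarrow> 'a \<Rightarrow> real" where
  "dual \<equiv> dual_basis ne Om nloc loc Bern C N \<Omega>"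

definition dual_elem :: "nat \<Rightarrow> nat \<Rightarrow> 'a \<Rightarrow> real" where
  "dual_elem e A x =
     (if \<exists>a<nloc e. loc e a = A then
        dual_local (nloc e) (C e) (Bern e) (Om e) (\<lambda>a. dual_weight N \<Omega> (Om e) (loc e a))
          (THE a. a < nloc e \<and> loc e a = A) x
      else 0)"

definition spline :: "(nat \<Rightarrow> real) \<Rightarrow> 'a \<Rightarrow> real" where
  "spline P x = (\<Sum>B<n. P B * N B x)"

lemma elem_subset: "e < ne \<Longrightarrow> Om e \<subseteq> \<Omega>"
  using partition by auto

lemma dual_eq_dual_elem_least:
  "x \<in> \<Omega> \<Longrightarrow> dual A x = dual_elem (LEAST e. e < ne \<and> x \<in> Om e) A x"
  using partition unfolding dual_basis_def dual_elem_def Let_def by auto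

lemma dual_elem_loc:
  assumes e: "e < ne" and a: "a < nloc e"
  shows "dual_elem e (loc e a)
       = dual_local (nloc e) (C e) (Bern e) (Om e) (\<lambda>a. dual_weight N \<Omega> (Om e) (loc e a)) a"
proof -
  have "(THE a'. a' < nloc e \<and> loc e a' = loc e a) = a"
    using a loc_inj[OF e] by (intro the_equality) (auto simp: inj_on_def)
  thus ?thesis using a unfolding dual_elem_def by (auto simp: fun_eq_iff)
qed

lemma dual_elem_inactive: "A \<notin> loc e ` {..<nloc e} \<Longrightarrow> dual_elem e A = (\<lambda>x. 0)"
  unfolding dual_elem_def by (auto simp: fun_eq_iff)

lemma N_inactive: "e < ne \<Longrightarrow> B < n \<Longrightarrow> B \<notin> loc e ` {..<nloc e} \<Longrightarrow> x \<in> Om e \<Longrightarrow> N B x = 0"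
  using loc_active by blast

lemma spline_on_elem:
  assumes e: "e < ne" and x: "x \<in> Om e"
  shows "spline P x = (\<Sum>k<nloc e. (\<Sum>b<nloc e. P (loc e b) * C e b k) * Bern e k x)"
proof -
  have "spline P x = (\<Sum>B\<in>loc e ` {..<nloc e}. P B * N B x)"
    unfolding spline_def using loc_active[OF e] N_inactive[OF e _ _ x]
    by (intro sum.mono_neutral_right) auto
  also have "\<dots> = (\<Sum>b<nloc e. P (loc e b) * (\<Sum>k<nloc e. C e b k * Bern e k x))"
    using extraction[OF e _ x] by (simp add: sum.reindex[OF loc_inj[OF e]])
  also have "\<dots> = (\<Sum>k<nloc e. \<Sum>b<nloc e. P (loc e b) * C e b k * Bern e k x)"
    by (subst sum.swap) (simp add: sum_distrib_left mult.assoc)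
  finally show ?thesis by (simp add: sum_distrib_right)
qed

lemma set_integrable_dual_elem_mult:
  assumes "\<And>j. j < nloc e \<Longrightarrow> set_integrable lebesgue (Om e) (\<lambda>x. Bern e j x * u x)"
  shows "set_integrable lebesgue (Om e) (\<lambda>x. dual_elem e A x * u x)"
proof (cases "\<exists>a<nloc e. loc e a = A")
  case True
  thus ?thesis unfolding dual_elem_def using set_integrable_dual_local_mult[OF assms] by simp
next
  case False
  hence "A \<notin> loc e ` {..<nloc e}" by auto
  thus ?thesis by (simp add: dual_elem_inactive)
qed

lemma set_integral_dual_mult:
  assumes "\<And>e j. e < ne \<Longrightarrow> j < nloc e \<Longrightarrow> set_integrable lebesgue (Om e) (\<lambda>x. Bern e j x * u x)"
  shows "set_integrable lebesgue \<Omega> (\<lambda>x. dual A x * u x)"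
    and "(LINT x:\<Omega>|lebesgue. dual A x * u x) = (\<Sum>e<ne. LINT x:Om e|lebesgue. dual_elem e A x * u x)"
  using set_integral_glue_least[where S = Om and k = ne and f = "\<lambda>e x. dual_elem e A x * u x"
      and h = "\<lambda>x. dual A x * u x", OF elem_meas elem_disj set_integrable_dual_elem_mult[OF assms]]
  unfolding partition[symmetric] by (auto simp: dual_eq_dual_elem_least)

lemma set_integral_N_elems:
  assumes A: "A < n"
  shows "(LINT x:\<Omega>|lebesgue. N A x) = (\<Sum>e<ne. LINT x:Om e|lebesgue. N A x)"
  using set_integral_glue_least(2)[where S = Om and k = ne and f = "\<lambda>e. N A" and h = "N A",
      OF elem_meas elem_disj set_integrable_subset[OF N_int[OF A] elem_meas elem_subset]]
  unfolding partition[symmetric] by auto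

lemma set_integrable_Bern_mult_spline:
  assumes e: "e < ne" and j: "j < nloc e"
  shows "set_integrable lebesgue (Om e) (\<lambda>x. Bern e j x * spline P x)"
proof -
  let ?q = "\<lambda>k. \<Sum>b<nloc e. P (loc e b) * C e b k"
  have "set_integrable lebesgue (Om e) (\<lambda>x. \<Sum>k<nloc e. ?q k * (Bern e j x * Bern e k x))"
    using e j by (intro set_integrable_sum set_integrable_mult_right
        set_integrable_mult_square_integrable Bern_meas Bern_L2) auto
  moreover have "Bern e j x * spline P x = (\<Sum>k<nloc e. ?q k * (Bern e j x * Bern e k x))"
    if "x \<in> Om e" for x
    using spline_on_elem[OF e that] by (simp add: sum_distrib_left mult_ac)
  hence "set_integrable lebesgue (Om e) (\<lambda>x. Bern e j x * spline P x)
      = set_integrable lebesgue (Om e) (\<lambda>x. \<Sum>k<nloc e. ?q k * (Bern e j x * Bern e k x))"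
    by (intro set_integrable_cong) auto
  ultimately show ?thesis by simp
qed

lemma set_integral_dual_elem_spline:
  assumes e: "e < ne" and A: "A < n"
  shows "(LINT x:Om e|lebesgue. dual_elem e A x * spline P x)
       = P A * (LINT x:Om e|lebesgue. N A x) / (LINT x:\<Omega>|lebesgue. N A x)"
proof (cases "A \<in> loc e ` {..<nloc e}")
  case True
  then obtain a where a: "a < nloc e" and A_eq: "A = loc e a" by blast
  have "(LINT x:Om e|lebesgue. dual_elem e A x * spline P x)
      = (LINT x:Om e|lebesgue. dual_local (nloc e) (C e) (Bern e) (Om e)
            (\<lambda>a. dual_weight N \<Omega> (Om e) (loc e a)) a x
          * (\<Sum>k<nloc e. (\<Sum>b<nloc e. P (loc e b) * C e b k) * Bern e k x))"
    using elem_meas[OF e] by (intro set_lebesgue_integral_cong)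
      (simp_all add: A_eq dual_elem_loc[OF e a] spline_on_elem[OF e])
  also have "\<dots> = dual_weight N \<Omega> (Om e) A * P A"
    unfolding A_eq
    using dual_local_biorthogonal[OF Bern_meas[OF e] Bern_L2[OF e] C_inv[OF e]
        invertible_gram[OF Bern_meas[OF e] Bern_L2[OF e] Bern_indep[OF e]] a] by simp
  finally show ?thesis by (simp add: dual_weight_def)
next
  case False
  have "(LINT x:Om e|lebesgue. N A x) = 0"
    using N_inactive[OF e A False] elem_meas[OF e]
    by (subst set_lebesgue_integral_cong[where g = "\<lambda>x. 0"]) auto
  thus ?thesis by (simp add: dual_elem_inactive[OF False])
qed

lemma dual_biorthogonal:
  assumes A: "A < n"
  shows "(LINT x:\<Omega>|lebesgue. dual A x * spline P x) = P A"
proof -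
  have "(LINT x:\<Omega>|lebesgue. dual A x * spline P x)
      = (\<Sum>e<ne. P A * (LINT x:Om e|lebesgue. N A x) / (LINT x:\<Omega>|lebesgue. N A x))"
    by (simp add: set_integral_dual_mult(2) set_integrable_Bern_mult_spline
        set_integral_dual_elem_spline A)
  also have "\<dots> = P A"
    using N_int_pos[OF A] by (simp add: set_integral_N_elems[OF A, symmetric]
        sum_divide_distrib[symmetric] sum_distrib_left[symmetric])
  finally show ?thesis .
qed

lemma set_integrable_dual_mult_square_integrable:
  assumes um: "set_borel_measurable lebesgue \<Omega> u"
    and u2: "set_integrable lebesgue \<Omega> (\<lambda>x. (u x)\<^sup>2)"
  shows "set_integrable lebesgue \<Omega> (\<lambda>x. dual A x * u x)"
  using elem_meas elem_subset
  by (intro set_integral_dual_mult(1) set_integrable_mult_square_integrable Bern_meas Bern_L2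
      set_borel_measurable_subset[OF um] set_integrable_subset[OF u2])

lemma dual_proj_spline: "x \<in> \<Omega> \<Longrightarrow> dual_proj n dual N \<Omega> (spline P) x = spline P x"
  unfolding dual_proj_def by (simp add: dual_biorthogonal spline_def[of P x])

lemma dual_proj_linear:
  assumes "set_borel_measurable lebesgue \<Omega> u" "set_integrable lebesgue \<Omega> (\<lambda>x. (u x)\<^sup>2)"
    and "set_borel_measurable lebesgue \<Omega> v" "set_integrable lebesgue \<Omega> (\<lambda>x. (v x)\<^sup>2)"
  shows "dual_proj n dual N \<Omega> (\<lambda>y. \<alpha> * u y + \<beta> * v y)
       = (\<lambda>x. \<alpha> * dual_proj n dual N \<Omega> u x + \<beta> * dual_proj n dual N \<Omega> v x)"
proof -
  have "(LINT y:\<Omega>|lebesgue. dual A y * (\<alpha> * u y + \<beta> * v y))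
      = \<alpha> * (LINT y:\<Omega>|lebesgue. dual A y * u y) + \<beta> * (LINT y:\<Omega>|lebesgue. dual A y * v y)" for A
    using set_integrable_dual_mult_square_integrable[OF assms(1,2), of A]
      set_integrable_dual_mult_square_integrable[OF assms(3,4), of A]
    by (simp add: distrib_left mult.left_commute set_integral_add)
  thus ?thesis
    unfolding dual_proj_def by (simp add: fun_eq_iff sum.distrib sum_distrib_left algebra_simps)
qed

end

theorem mainTheorem2:
  fixes \<Omega> :: "'a::euclidean_space set"
    and n :: nat
    and N :: "nat \<Rightarrow> 'a \<Rightarrow> real"
    and ne :: nat
    and Om :: "nat \<Rightarrow> 'a set"
    and nloc :: "nat \<Rightarrow> nat"
    and loc :: "nat \<Rightarrow> nat \<Rightarrow> nat"
    and Bern :: "nat \<Rightarrow> nat \<Rightarrow> 'a \<Rightarrow> real"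
    and C :: "nat \<Rightarrow> nat \<Rightarrow> nat \<Rightarrow> real"
  assumes partition: "\<Omega> = (\<Union>e<ne. Om e)"
    and elem_meas: "\<And>e. e < ne \<Longrightarrow> Om e \<in> sets lebesgue"
    and elem_pos: "\<And>e. e < ne \<Longrightarrow> emeasure lebesgue (Om e) > 0"
    and elem_disj: "\<And>e e'. e < ne \<Longrightarrow> e' < ne \<Longrightarrow> e \<noteq> e' \<Longrightarrow> Om e \<inter> Om e' \<in> null_sets lebesgue"
    and N_nonneg: "\<And>A x. A < n \<Longrightarrow> x \<in> \<Omega> \<Longrightarrow> N A x \<ge> 0"
    and N_int: "\<And>A. A < n \<Longrightarrow> set_integrable lebesgue \<Omega> (N A)"
    and N_int_pos: "\<And>A. A < n \<Longrightarrow> (LINT x:\<Omega>|lebesgue. N A x) > 0"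
    and loc_inj: "\<And>e. e < ne \<Longrightarrow> inj_on (loc e) {..<nloc e}"
    and loc_active: "\<And>e. e < ne \<Longrightarrow> loc e ` {..<nloc e} = {A. A < n \<and> (\<exists>x\<in>Om e. N A x \<noteq> 0)}"
    and Bern_meas: "\<And>e i. e < ne \<Longrightarrow> i < nloc e \<Longrightarrow> set_borel_measurable lebesgue (Om e) (Bern e i)"
    and Bern_L2: "\<And>e i. e < ne \<Longrightarrow> i < nloc e \<Longrightarrow> set_integrable lebesgue (Om e) (\<lambda>x. (Bern e i x)\<^sup>2)"
    and Bern_indep: "\<And>e c. e < ne \<Longrightarrow>
        (AE x in lebesgue. x \<in> Om e \<longrightarrow> (\<Sum>i<nloc e. c i * Bern e i x) = 0) \<Longrightarrow> (\<forall>i<nloc e. c i = 0)"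
    and C_inv: "\<And>e. e < ne \<Longrightarrow> invertible_mat_n (nloc e) (C e)"
    and extraction: "\<And>e a x. e < ne \<Longrightarrow> a < nloc e \<Longrightarrow> x \<in> Om e \<Longrightarrow>
        N (loc e a) x = (\<Sum>i<nloc e. C e a i * Bern e i x)"
  shows
    "(\<forall>P :: nat \<Rightarrow> real. \<forall>A<n.
        P A = (LINT x:\<Omega>|lebesgue. dual_basis ne Om nloc loc Bern C N \<Omega> A x * (\<Sum>B<n. P B * N B x)))
     \<and> (\<forall>P :: nat \<Rightarrow> real. \<forall>x\<in>\<Omega>.
        dual_proj n (dual_basis ne Om nloc loc Bern C N \<Omega>) N \<Omega> (\<lambda>y. \<Sum>B<n. P B * N B y) x
          = (\<Sum>B<n. P B * N B x))
     \<and> (\<forall>u v :: 'a \<Rightarrow> real. \<forall>\<alpha> \<beta> :: real.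
        set_borel_measurable lebesgue \<Omega> u \<longrightarrow> set_integrable lebesgue \<Omega> (\<lambda>x. (u x)\<^sup>2) \<longrightarrow>
        set_borel_measurable lebesgue \<Omega> v \<longrightarrow> set_integrable lebesgue \<Omega> (\<lambda>x. (v x)\<^sup>2) \<longrightarrow>
        dual_proj n (dual_basis ne Om nloc loc Bern C N \<Omega>) N \<Omega> (\<lambda>y. \<alpha> * u y + \<beta> * v y)
          = (\<lambda>x. \<alpha> * dual_proj n (dual_basis ne Om nloc loc Bern C N \<Omega>) N \<Omega> u x
                + \<beta> * dual_proj n (dual_basis ne Om nloc loc Bern C N \<Omega>) N \<Omega> v x))"
proof -
  interpret bezier_extraction \<Omega> n N ne Om nloc loc Bern C
    using partition elem_meas elem_disj N_int N_int_pos loc_inj loc_active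
      Bern_meas Bern_L2 Bern_indep C_inv extraction
    by unfold_locales
  show ?thesis
    using dual_biorthogonal dual_proj_spline dual_proj_linear
    unfolding spline_def by auto
qed

end
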